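(* Let $\Sigma\subset\mathbb G$ be a regular surface and $\gamma=(\gamma_1,\gamma_2,\gamma_3):[a,b]\to\Sigma$ a Euclidean $C^2$-smooth regular curve, and let $t\in[a,b]$ be such that $\gamma(t)$ is a non-characteristic point of $\Sigma$, with $\bar p,\bar q$ evaluated at $\gamma(t)$. Write $\omega(\dot\gamma(t))=\frac{\dot\gamma_2}{\gamma_1}-\dot\gamma_3$. (i) If $\omega(\dot\gamma(t))\ne0$, then $k^{\infty,s}_{\gamma,\Sigma}=\lim_{L\to+\infty}k^{L,s}_{\gamma,\Sigma}$ exists and equals $\dfrac{\bar p\dot\gamma_1+\bar q\dot\gamma_2}{\gamma_1|\omega(\dot\gamma(t))|}$. (ii) If $\omega(\dot\gamma(t))=0$ and $\frac{d}{dt}\omega(\dot\gamma(t))=0$, then $k^{\infty,s}_{\gamma,\Sigma}=0$. (iii) If $\omega(\dot\gamma(t))=0$ and $\frac{d}{dt}\omega(\dot\gamma(t))\ne0$, then $$\lim_{L\to+\infty}\frac{k^{L,s}_{\gamma,\Sigma}}{\sqrt L}=\frac{\big(-\bar q\frac{\dot\gamma_1}{\gamma_1}+\bar p\dot\gamma_3\big)\frac{d}{dt}\omega(\dot\gamma(t))}{\big|\bar q\frac{\dot\gamma_1}{\gamma_1}-\bar p\dot\gamma_3\big|^3}.$$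
   Context: $\mathbb G=(0,\infty)\times\mathbb R^2$ is the affine group with coordinates $(x_1,x_2,x_3)$. Let $X_1=x_1\partial_{x_1}$, $X_2=x_1\partial_{x_2}+\partial_{x_3}$, $X_3=x_1\partial_{x_2}$ with dual forms $\omega_1=x_1^{-1}dx_1$, $\omega_2=dx_3$, $\omega=x_1^{-1}dx_2-dx_3$; for $L>0$, $g_L=\omega_1\otimes\omega_1+\omega_2\otimes\omega_2+L\,\omega\otimes\omega$ (so $X_1,X_2,\widetilde X_3:=L^{-1/2}X_3$ is orthonormal) with Levi-Civita connection $\nabla^L$. A regular surface is a Euclidean $C^2$-smooth compact oriented surface $\Sigma=\{u=0\}$ with $u$ Euclidean $C^2$ and nonvanishing Euclidean gradient. Put $p=X_1u$, $q=X_2u$, $r=\widetilde X_3u$, $l=\sqrt{p^2+q^2}$, $l_L=\sqrt{p^2+q^2+r^2}$, $\bar p=p/l$, $\bar q=q/l$, $\bar r_L=r/l_L$; non-characteristic means $l\neq0$. There $e_1=\bar qX_1-\bar pX_2$, $e_2=\bar r_L\bar pX_1+\bar r_L\bar qX_2-\frac l{l_L}\widetilde X_3$ is an orthonormal tangent frame of $\Sigma$, and $J_L:T\Sigma\to T\Sigma$ is the linear map with $J_L(e_1)=e_2$, $J_L(e_2)=-e_1$. $\nabla^{\Sigma,L}_UV$ is the $g_L$-orthogonal projection of $\nabla^L_UV$ onto $T\Sigma$. The signed geodesic curvature is $k^{L,s}_{\gamma,\Sigma}=\dfrac{\langle\nabla^{\Sigma,L}_{\dot\gamma}\dot\gamma,J_L(\dot\gamma)\rangle_L}{\|\dot\gamma\|_L^3}$,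 and $k^{\infty,s}_{\gamma,\Sigma}:=\lim_{L\to+\infty}k^{L,s}_{\gamma,\Sigma}$ when it exists. *)

theory Defs
  imports "HOL-Analysis.Analysis"
begin

(* Points of the affine group G = (0,oo) x R^2 are vectors x :: real^3 with
   coordinates x$1, x$2, x$3 and x$1 > 0.  Tangent vectors are written in the
   coordinate basis d/dx1, d/dx2, d/dx3. *)

definition AffG :: "(real^3) set" where
  "AffG = {x. 0 < x$1}"

definition X1 :: "real^3 \<Rightarrow> real^3" where "X1 x = vector [x$1, 0, 0]"
definition X2 :: "real^3 \<Rightarrow> real^3" where "X2 x = vector [0, x$1, 1]"
definition X3 :: "real^3 \<Rightarrow> real^3" where "X3 x = vector [0, x$1, 0]"
definition Xt3 :: "real \<Rightarrow> real^3 \<Rightarrow> real^3" where "Xt3 L x = (1 / sqrt L) *\<^sub>R X3 x"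

definition om1 :: "real^3 \<Rightarrow> real^3" where "om1 x = vector [1 / x$1, 0, 0]"
definition om2 :: "real^3 \<Rightarrow> real^3" where "om2 x = vector [0, 0, 1]"
definition om :: "real^3 \<Rightarrow> real^3" where "om x = vector [0, 1 / x$1, -1]"

definition omega :: "real^3 \<Rightarrow> real^3 \<Rightarrow> real" where
  "omega x v = om x \<bullet> v"

definition outer :: "real^3 \<Rightarrow> real^3^3" where
  "outer a = (\<chi> i j. a$i * a$j)"

definition gmat :: "real \<Rightarrow> real^3 \<Rightarrow> real^3^3" where
  "gmat L x = outer (om1 x) + outer (om2 x) + L *\<^sub>R outer (om x)"

definition gL :: "real \<Rightarrow> real^3 \<Rightarrow> real^3 \<Rightarrow> real^3 \<Rightarrow> real" where
  "gL L x v w = v \<bullet> (gmat L x *v w)"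

definition normL :: "real \<Rightarrow> real^3 \<Rightarrow> real^3 \<Rightarrow> real" where
  "normL L x v = sqrt (gL L x v v)"

definition dmetric :: "real \<Rightarrow> real^3 \<Rightarrow> 3 \<Rightarrow> real^3^3" where
  "dmetric L x l = (\<chi> i j. deriv (\<lambda>s. gmat L (x + s *\<^sub>R axis l 1) $ i $ j) 0)"

definition christoffel :: "real \<Rightarrow> real^3 \<Rightarrow> 3 \<Rightarrow> 3 \<Rightarrow> 3 \<Rightarrow> real" where
  "christoffel L x k i j = 1/2 * (\<Sum>l\<in>UNIV. matrix_inv (gmat L x) $ k $ l *
      (dmetric L x i $ j $ l + dmetric L x j $ i $ l - dmetric L x l $ i $ j))"

(* nabla^L_{dot gamma} dot gamma at a point x with velocity v and Euclidean acceleration a *)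
definition cov_acc :: "real \<Rightarrow> real^3 \<Rightarrow> real^3 \<Rightarrow> real^3 \<Rightarrow> real^3" where
  "cov_acc L x v a = (\<chi> k. a$k + (\<Sum>i\<in>UNIV. \<Sum>j\<in>UNIV. christoffel L x k i j * v$i * v$j))"

definition C2_on :: "(real^3) set \<Rightarrow> (real^3 \<Rightarrow> real) \<Rightarrow> bool" where
  "C2_on S f \<longleftrightarrow> (\<exists>f' f''.
      (\<forall>x\<in>S. (f has_derivative (\<lambda>h. f' x \<bullet> h)) (at x)) \<and>
      (\<forall>x\<in>S. (f' has_derivative (\<lambda>h. (f'' x :: real^3^3) *v h)) (at x)) \<and>
      continuous_on S f'')"

definition regular_surface :: "(real^3 \<Rightarrow> real) \<Rightarrow> (real^3) set \<Rightarrow> bool" where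
  "regular_surface u \<Sigma> \<longleftrightarrow> C2_on AffG u \<and> compact \<Sigma> \<and> \<Sigma> \<subseteq> AffG \<and>
      \<Sigma> = {x \<in> AffG. u x = 0} \<and>
      (\<forall>x\<in>\<Sigma>. frechet_derivative u (at x) \<noteq> (\<lambda>h. 0))"

definition C2_curve :: "(real \<Rightarrow> real^3) \<Rightarrow> real \<Rightarrow> real \<Rightarrow> bool" where
  "C2_curve \<gamma> a b \<longleftrightarrow> (\<exists>\<gamma>' \<gamma>''.
      (\<forall>s\<in>{a..b}. (\<gamma> has_vector_derivative \<gamma>' s) (at s within {a..b})) \<and>
      (\<forall>s\<in>{a..b}. (\<gamma>' has_vector_derivative \<gamma>'' s) (at s within {a..b})) \<and>
      continuous_on {a..b} \<gamma>'')"

definition regular_curve :: "(real \<Rightarrow> real^3) \<Rightarrow> real \<Rightarrow> real \<Rightarrow> bool" where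
  "regular_curve \<gamma> a b \<longleftrightarrow> C2_curve \<gamma> a b \<and>
      (\<forall>s\<in>{a..b}. vector_derivative \<gamma> (at s within {a..b}) \<noteq> 0)"

definition pu :: "(real^3 \<Rightarrow> real) \<Rightarrow> real^3 \<Rightarrow> real" where
  "pu u x = frechet_derivative u (at x) (X1 x)"
definition qu :: "(real^3 \<Rightarrow> real) \<Rightarrow> real^3 \<Rightarrow> real" where
  "qu u x = frechet_derivative u (at x) (X2 x)"
definition ru :: "real \<Rightarrow> (real^3 \<Rightarrow> real) \<Rightarrow> real^3 \<Rightarrow> real" where
  "ru L u x = frechet_derivative u (at x) (Xt3 L x)"
definition lu :: "(real^3 \<Rightarrow> real) \<Rightarrow> real^3 \<Rightarrow> real" where
  "lu u x = sqrt ((pu u x)\<^sup>2 + (qu u x)\<^sup>2)"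
definition lLu :: "real \<Rightarrow> (real^3 \<Rightarrow> real) \<Rightarrow> real^3 \<Rightarrow> real" where
  "lLu L u x = sqrt ((pu u x)\<^sup>2 + (qu u x)\<^sup>2 + (ru L u x)\<^sup>2)"
definition pbar :: "(real^3 \<Rightarrow> real) \<Rightarrow> real^3 \<Rightarrow> real" where
  "pbar u x = pu u x / lu u x"
definition qbar :: "(real^3 \<Rightarrow> real) \<Rightarrow> real^3 \<Rightarrow> real" where
  "qbar u x = qu u x / lu u x"
definition rbar :: "real \<Rightarrow> (real^3 \<Rightarrow> real) \<Rightarrow> real^3 \<Rightarrow> real" where
  "rbar L u x = ru L u x / lLu L u x"

definition noncharacteristic :: "(real^3 \<Rightarrow> real) \<Rightarrow> real^3 \<Rightarrow> bool" where
  "noncharacteristic u x \<longleftrightarrow> lu u x \<noteq> 0"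

(* orthonormal tangent frame e1, e2 of Sigma *)
definition e1 :: "(real^3 \<Rightarrow> real) \<Rightarrow> real^3 \<Rightarrow> real^3" where
  "e1 u x = qbar u x *\<^sub>R X1 x - pbar u x *\<^sub>R X2 x"
definition e2 :: "real \<Rightarrow> (real^3 \<Rightarrow> real) \<Rightarrow> real^3 \<Rightarrow> real^3" where
  "e2 L u x = (rbar L u x * pbar u x) *\<^sub>R X1 x + (rbar L u x * qbar u x) *\<^sub>R X2 x
              - (lu u x / lLu L u x) *\<^sub>R Xt3 L x"

definition projT :: "real \<Rightarrow> (real^3 \<Rightarrow> real) \<Rightarrow> real^3 \<Rightarrow> real^3 \<Rightarrow> real^3" where
  "projT L u x V = gL L x V (e1 u x) *\<^sub>R e1 u x + gL L x V (e2 L u x) *\<^sub>R e2 L u x"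

definition JL :: "real \<Rightarrow> (real^3 \<Rightarrow> real) \<Rightarrow> real^3 \<Rightarrow> real^3 \<Rightarrow> real^3" where
  "JL L u x v = gL L x v (e1 u x) *\<^sub>R e2 L u x - gL L x v (e2 L u x) *\<^sub>R e1 u x"

definition geod_curv_s :: "real \<Rightarrow> (real^3 \<Rightarrow> real) \<Rightarrow> (real \<Rightarrow> real^3) \<Rightarrow> real \<Rightarrow> real \<Rightarrow> real \<Rightarrow> real" where
  "geod_curv_s L u \<gamma> a b t =
     (let x = \<gamma> t;
          v = vector_derivative \<gamma> (at t within {a..b});
          acc = vector_derivative (\<lambda>s. vector_derivative \<gamma> (at s within {a..b})) (at t within {a..b})
      in gL L x (projT L u x (cov_acc L x v acc)) (JL L u x v) / (normL L x v) ^ 3)"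

end

theory Submission
  imports Defs
begin

(* In the coframe omega_1, omega_2, omega the metric g_L is diag(1, 1, L).  Write
   (alpha, beta, c) for the coframe components of the velocity.  The Christoffel symbols
   show that the omega-component of the covariant acceleration is
   omega(gamma'') - alpha (2 c + beta), which does not depend on L, while the other two
   components are affine in L with slopes c (c + beta) and - alpha c.  In the same coframe
   the frame e1, e2 and the tangency condition du(gamma') = 0 turn k^{L,s} into an explicit
   algebraic function of L.  After powers of sqrt L are factored out, it becomes a function
   of 1/L that is continuous at 0, and its value there gives (i) when c <> 0.  When c = 0,
   the curvature is sqrt L times such a function, whose value at 0 is proportional to the
   L-independent omega-component; for c = 0 that component equals d/dt omega(gamma'), which
   gives (iii).  If it vanishes, the function is O(1/L), which gives (ii). *)

section \<open>The metric and its Levi-Civita connection in the coframe\<close>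

lemma om1_inner: "om1 x \<bullet> V = V$1 / x$1"
  by (simp add: om1_def inner_vec_def sum_3)

lemma om2_inner: "om2 x \<bullet> V = V$3"
  by (simp add: om2_def inner_vec_def sum_3)

lemma omega_eq: "omega x V = V$2 / x$1 - V$3"
  by (simp add: omega_def om_def inner_vec_def sum_3)

lemma inner_outer_mult: "v \<bullet> (outer a *v w) = (a \<bullet> v) * (a \<bullet> w)"
  by (simp add: outer_def inner_vec_def matrix_vector_mult_def sum_3 algebra_simps)

lemma gL_coframe:
  "gL L x V W = (om1 x \<bullet> V) * (om1 x \<bullet> W) + (om2 x \<bullet> V) * (om2 x \<bullet> W)
     + L * (omega x V * omega x W)"
  by (simp add: gL_def gmat_def matrix_vector_mult_add_rdistrib
      scaleR_matrix_vector_assoc[symmetric] inner_add_right inner_outer_mult omega_def)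

lemma gL_sym: "gL L x V W = gL L x W V"
  by (simp add: gL_coframe mult_ac)

lemma gL_add_left: "gL L x (a *\<^sub>R V + b *\<^sub>R W) Z = a * gL L x V Z + b * gL L x W Z"
  by (simp add: gL_def inner_add_left)

lemma gL_diff_right: "gL L x Z (a *\<^sub>R V - b *\<^sub>R W) = a * gL L x Z V - b * gL L x Z W"
  by (simp add: gL_def matrix_vector_mult_diff_distrib matrix_vector_mult_scaleR inner_diff_right)

lemma normL_coframe:
  "normL L x V = sqrt ((om1 x \<bullet> V)^2 + (om2 x \<bullet> V)^2 + L * omega x V ^ 2)"
  by (simp add: normL_def gL_coframe power2_eq_square)

lemma coframe_expansion:
  assumes "x$1 \<noteq> 0"
  shows "V = (om1 x \<bullet> V) *\<^sub>R X1 x + (om2 x \<bullet> V) *\<^sub>R X2 x + omega x V *\<^sub>R X3 x"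
  using assms by (simp add: vec_eq_iff forall_3 X1_def X2_def X3_def om1_inner om2_inner omega_eq
      field_simps)

lemma gmat_entries:
  "gmat L x $1$1 = 1/(x$1)^2" "gmat L x $1$2 = 0" "gmat L x $1$3 = 0"
  "gmat L x $2$1 = 0" "gmat L x $2$2 = L/(x$1)^2" "gmat L x $2$3 = -L/(x$1)"
  "gmat L x $3$1 = 0" "gmat L x $3$2 = -L/(x$1)" "gmat L x $3$3 = 1 + L"
  by (simp_all add: gmat_def outer_def om1_def om2_def om_def power2_eq_square)

lemma matrix_inv_eqI:
  fixes A B :: "'a::comm_ring_1^'n^'n"
  assumes "A ** B = mat 1" "B ** A = mat 1"
  shows "matrix_inv A = B"
proof -
  have inv: "A ** matrix_inv A = mat 1 \<and> matrix_inv A ** A = mat 1"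
    unfolding matrix_inv_def by (rule someI[of _ B]) (use assms in blast)
  have "matrix_inv A = matrix_inv A ** (A ** B)"
    using assms by (simp add: matrix_mul_rid)
  also have "\<dots> = B"
    using inv by (simp add: matrix_mul_assoc matrix_mul_lid)
  finally show ?thesis .
qed

lemma matrix_inv_gmat:
  assumes "x$1 \<noteq> 0" "L \<noteq> 0"
  shows "matrix_inv (gmat L x) =
    vector [vector [(x$1)^2, 0, 0], vector [0, (x$1)^2*(1+L)/L, x$1], vector [0, x$1, 1]]"
  by (rule matrix_inv_eqI)
    (use assms in \<open>simp_all add: vec_eq_iff forall_3 matrix_matrix_mult_def sum_3 mat_def
      gmat_entries field_simps power2_eq_square\<close>)

lemma dmetric_eq_0:
  assumes "l \<noteq> 1" shows "dmetric L x l $ i $ j = 0"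
proof -
  have "gmat L (x + s *\<^sub>R axis l 1) = gmat L x" for s
    using assms by (simp add: gmat_def om1_def om2_def om_def axis_def)
  then show ?thesis unfolding dmetric_def by simp
qed

lemma dmetric_1_entries:
  assumes x: "x$1 \<noteq> 0"
  shows
  "dmetric L x 1 $1$1 = -2/(x$1)^3" "dmetric L x 1 $1$2 = 0" "dmetric L x 1 $1$3 = 0"
  "dmetric L x 1 $2$1 = 0" "dmetric L x 1 $2$2 = -2*L/(x$1)^3" "dmetric L x 1 $2$3 = L/(x$1)^2"
  "dmetric L x 1 $3$1 = 0" "dmetric L x 1 $3$2 = L/(x$1)^2" "dmetric L x 1 $3$3 = 0"
proof -
  have shift: "(x + s *\<^sub>R axis 1 1) $ 1 = x$1 + s" for s by (simp add: axis_def)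
  have "deriv (\<lambda>s. k/(x$1+s)^2) 0 = -2*k/(x$1)^3" "deriv (\<lambda>s. -(k/(x$1+s))) 0 = k/(x$1)^2" for k
    by (rule DERIV_imp_deriv; use x in \<open>auto intro!: derivative_eq_intros
        simp: field_simps power2_eq_square power3_eq_cube\<close>)+
  from this[of 1] this[of L] show
  "dmetric L x 1 $1$1 = -2/(x$1)^3" "dmetric L x 1 $1$2 = 0" "dmetric L x 1 $1$3 = 0"
  "dmetric L x 1 $2$1 = 0" "dmetric L x 1 $2$2 = -2*L/(x$1)^3" "dmetric L x 1 $2$3 = L/(x$1)^2"
  "dmetric L x 1 $3$1 = 0" "dmetric L x 1 $3$2 = L/(x$1)^2" "dmetric L x 1 $3$3 = 0"
    unfolding dmetric_def by (simp_all add: gmat_entries shift)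
qed

lemma cov_acc_coframe:
  assumes "x$1 \<noteq> 0" "L \<noteq> 0"
  shows "om1 x \<bullet> cov_acc L x v a
      = om1 x \<bullet> a - (om1 x \<bullet> v)^2 + L * omega x v * (omega x v + om2 x \<bullet> v)"
    "om2 x \<bullet> cov_acc L x v a = om2 x \<bullet> a - L * (om1 x \<bullet> v) * omega x v"
    "omega x (cov_acc L x v a) = omega x a - (om1 x \<bullet> v) * (2 * omega x v + om2 x \<bullet> v)"
  using assms
  by (simp_all add: om1_inner om2_inner omega_eq cov_acc_def christoffel_def sum_3 matrix_inv_gmat
      dmetric_eq_0 dmetric_1_entries field_simps power2_eq_square power3_eq_cube)

section \<open>The tangent frame of the surface\<close>

lemma frechet_derivative_coframe:
  assumes u: "u differentiable (at x)" and x: "x$1 \<noteq> 0"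
  shows "frechet_derivative u (at x) V = pu u x * (om1 x \<bullet> V) + qu u x * (om2 x \<bullet> V)
           + frechet_derivative u (at x) (X3 x) * omega x V"
proof -
  interpret linear "frechet_derivative u (at x)"
    using linear_frechet_derivative[OF u] .
  show ?thesis
    using arg_cong[OF coframe_expansion[OF x, of V], of "frechet_derivative u (at x)"]
    by (simp add: add scale pu_def qu_def mult.commute)
qed

lemma ru_eq:
  assumes "u differentiable (at x)"
  shows "ru L u x = frechet_derivative u (at x) (X3 x) / sqrt L"
proof -
  interpret linear "frechet_derivative u (at x)"
    using linear_frechet_derivative[OF assms] .
  show ?thesis by (simp add: ru_def Xt3_def scale)
qed

lemma pbar_qbar_sum_squares:
  assumes "noncharacteristic u x"
  shows "pbar u x ^ 2 + qbar u x ^ 2 = 1"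
proof -
  have "pbar u x ^ 2 + qbar u x ^ 2 = (pu u x ^ 2 + qu u x ^ 2) / lu u x ^ 2"
    by (simp add: pbar_def qbar_def power_divide add_divide_distrib)
  also have "\<dots> = 1"
    using assms by (simp add: noncharacteristic_def lu_def)
  finally show ?thesis .
qed

lemma pbar_qbar_tangent:
  assumes u: "u differentiable (at x)" and x: "x$1 \<noteq> 0"
    and tangent: "frechet_derivative u (at x) v = 0"
  shows "pbar u x * (om1 x \<bullet> v) + qbar u x * (om2 x \<bullet> v)
    = - frechet_derivative u (at x) (X3 x) * omega x v / lu u x"
proof -
  have "pu u x * (om1 x \<bullet> v) + qu u x * (om2 x \<bullet> v)
      = - frechet_derivative u (at x) (X3 x) * omega x v"
    using frechet_derivative_coframe[OF u x, of v] tangent by simp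
  then show ?thesis
    by (simp add: pbar_def qbar_def add_divide_distrib[symmetric])
qed

lemma e1_coframe:
  assumes "x$1 \<noteq> 0"
  shows "om1 x \<bullet> e1 u x = qbar u x" "om2 x \<bullet> e1 u x = - pbar u x" "omega x (e1 u x) = 0"
  using assms by (simp_all add: om1_inner om2_inner omega_eq e1_def X1_def X2_def)

lemma e2_coframe:
  assumes u: "u differentiable (at x)" and x: "x$1 \<noteq> 0" and L: "L > 0"
  defines "R \<equiv> frechet_derivative u (at x) (X3 x)"
    and "M \<equiv> sqrt (L * lu u x ^ 2 + frechet_derivative u (at x) (X3 x) ^ 2)"
  shows "om1 x \<bullet> e2 L u x = R / M * pbar u x" "om2 x \<bullet> e2 L u x = R / M * qbar u x"
    "omega x (e2 L u x) = - lu u x / M"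
proof -
  have "lLu L u x ^ 2 = lu u x ^ 2 + (R / sqrt L) ^ 2"
    by (simp add: lLu_def lu_def ru_eq[OF u] R_def)
  also have "\<dots> = (M / sqrt L) ^ 2"
    using L by (simp add: M_def R_def power_divide field_simps)
  finally have "lLu L u x = M / sqrt L"
    using L by (simp add: lLu_def M_def)
  then have "rbar L u x = R / M" "lu u x / lLu L u x / sqrt L = lu u x / M"
    using L by (simp_all add: rbar_def ru_eq[OF u] R_def)
  then show "om1 x \<bullet> e2 L u x = R / M * pbar u x" "om2 x \<bullet> e2 L u x = R / M * qbar u x"
    "omega x (e2 L u x) = - lu u x / M"
    using x by (simp_all add: om1_inner om2_inner omega_eq e2_def X1_def X2_def Xt3_def X3_def
        field_simps)
qed

lemma gL_e1:
  assumes "x$1 \<noteq> 0"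
  shows "gL L x V (e1 u x) = qbar u x * (om1 x \<bullet> V) - pbar u x * (om2 x \<bullet> V)"
  by (simp add: gL_coframe e1_coframe[OF assms])

lemma gL_e2:
  assumes "u differentiable (at x)" "x$1 \<noteq> 0" "L > 0"
  defines "R \<equiv> frechet_derivative u (at x) (X3 x)"
    and "M \<equiv> sqrt (L * lu u x ^ 2 + frechet_derivative u (at x) (X3 x) ^ 2)"
  shows "gL L x V (e2 L u x)
    = (R * (pbar u x * (om1 x \<bullet> V) + qbar u x * (om2 x \<bullet> V)) - L * lu u x * omega x V) / M"
  unfolding R_def M_def
  by (simp add: gL_coframe e2_coframe[OF assms(1-3)] add_divide_distrib diff_divide_distrib
      algebra_simps)

lemma e1_e2_orthonormal:
  assumes u: "u differentiable (at x)" and x: "x$1 \<noteq> 0" and L: "L > 0"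
    and nc: "noncharacteristic u x"
  shows "gL L x (e1 u x) (e1 u x) = 1" "gL L x (e2 L u x) (e1 u x) = 0"
    "gL L x (e2 L u x) (e2 L u x) = 1"
proof -
  define R where "R = frechet_derivative u (at x) (X3 x)"
  define M where "M = sqrt (L * lu u x ^ 2 + R ^ 2)"
  have pq: "pbar u x ^ 2 + qbar u x ^ 2 = 1"
    using pbar_qbar_sum_squares[OF nc] .
  have "L * lu u x ^ 2 > 0"
    using L nc by (simp add: noncharacteristic_def)
  then have "R ^ 2 + L * lu u x ^ 2 = M ^ 2" "M \<noteq> 0"
    by (simp_all add: M_def add_pos_nonneg less_imp_neq[symmetric])
  then have "(R^2 * (pbar u x ^ 2 + qbar u x ^ 2) + L * lu u x ^ 2) / M^2 = 1"
    unfolding pq by simp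
  then show "gL L x (e1 u x) (e1 u x) = 1" "gL L x (e2 L u x) (e1 u x) = 0"
    "gL L x (e2 L u x) (e2 L u x) = 1"
    using pq e1_coframe[OF x] e2_coframe[OF u x L]
    unfolding gL_e1[OF x] gL_e2[OF u x L] R_def[symmetric] M_def[symmetric]
    by (simp_all add: algebra_simps power2_eq_square diff_divide_distrib add_divide_distrib)
qed

lemma gL_projT_JL:
  assumes "u differentiable (at x)" "x$1 \<noteq> 0" "L > 0" "noncharacteristic u x"
  shows "gL L x (projT L u x A) (JL L u x V)
    = gL L x A (e2 L u x) * gL L x V (e1 u x) - gL L x A (e1 u x) * gL L x V (e2 L u x)"
  using e1_e2_orthonormal[OF assms] gL_sym[of L x "e1 u x" "e2 L u x"]
  unfolding projT_def JL_def gL_diff_right gL_add_left by simp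

lemma gL_tangent_e2:
  assumes u: "u differentiable (at x)" and x: "x$1 \<noteq> 0" and L: "L > 0"
    and tangent: "frechet_derivative u (at x) v = 0" and nc: "noncharacteristic u x"
  shows "gL L x v (e2 L u x)
    = - omega x v * sqrt (L * lu u x ^ 2 + frechet_derivative u (at x) (X3 x) ^ 2) / lu u x"
proof -
  define l R where "l = lu u x" and "R = frechet_derivative u (at x) (X3 x)"
  define M where "M = sqrt (L * l^2 + R^2)"
  have "l \<noteq> 0" using nc by (simp add: l_def noncharacteristic_def)
  have "L * l^2 > 0" using L \<open>l \<noteq> 0\<close> by simp
  then have M: "R^2 + L * l^2 = M^2" "M \<noteq> 0"
    by (simp_all add: M_def add_pos_nonneg less_imp_neq[symmetric])
  have "gL L x v (e2 L u x) = (R * (- R * omega x v / l) - L * l * omega x v) / M"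
    using pbar_qbar_tangent[OF u x tangent]
    unfolding gL_e2[OF u x L] l_def[symmetric] R_def[symmetric] M_def[symmetric] by simp
  also have "\<dots> = - omega x v * (R^2 + L * l^2) / (l * M)"
    using \<open>l \<noteq> 0\<close> M(2) by (simp add: field_simps power2_eq_square)
  also have "\<dots> = - omega x v * M / l"
    using M by (simp add: power2_eq_square)
  finally show ?thesis
    unfolding M_def l_def R_def .
qed

section \<open>The geodesic curvature as a function of L\<close>

text \<open>Here \<open>pb\<close> and \<open>qb\<close> stand for p-bar and q-bar, \<open>R = X\<^sub>3 u = sqrt L * r\<close>
  (so \<open>M = sqrt L * l\<^sub>L\<close>), \<open>\<alpha>, \<beta>, c\<close> are the coframe components of the velocity, and the
  coframe components of the covariant acceleration are \<open>A0 + L c (c + \<beta>)\<close>, \<open>B0 - L \<alpha> c\<close> and \<open>C\<close>.\<close>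

definition geod_curv_expr ::
    "real \<Rightarrow> real \<Rightarrow> real \<Rightarrow> real \<Rightarrow> real \<Rightarrow> real \<Rightarrow> real \<Rightarrow> real \<Rightarrow> real \<Rightarrow> real \<Rightarrow> real \<Rightarrow> real"
  where
  "geod_curv_expr pb qb R l \<alpha> \<beta> c A0 B0 C L =
    (let A = A0 + L*c*(c+\<beta>); B = B0 - L*\<alpha>*c; M = sqrt (L*l^2 + R^2) in
     ((R*(pb*A + qb*B) - L*l*C) * (qb*\<alpha> - pb*\<beta>) / M + (qb*A - pb*B) * c * M / l)
     / sqrt (\<alpha>^2 + \<beta>^2 + L*c^2) ^ 3)"

lemma curvature_eq_geod_curv_expr:
  assumes x: "x$1 \<noteq> 0" and L: "L > 0" and u: "u differentiable (at x)"
    and tangent: "frechet_derivative u (at x) v = 0" and nc: "noncharacteristic u x"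
  defines "\<alpha> \<equiv> om1 x \<bullet> v" and "\<beta> \<equiv> om2 x \<bullet> v" and "c \<equiv> omega x v"
  shows "gL L x (projT L u x (cov_acc L x v a)) (JL L u x v) / normL L x v ^ 3
    = geod_curv_expr (pbar u x) (qbar u x) (frechet_derivative u (at x) (X3 x)) (lu u x) \<alpha> \<beta> c
        (om1 x \<bullet> a - \<alpha>^2) (om2 x \<bullet> a) (omega x a - \<alpha> * (2*c + \<beta>)) L"
proof -
  define pb qb l R where "pb = pbar u x" and "qb = qbar u x" and "l = lu u x"
    and "R = frechet_derivative u (at x) (X3 x)"
  define M where "M = sqrt (L * l^2 + R^2)"
  define A B C where "A = om1 x \<bullet> a - \<alpha>^2 + L*c*(c+\<beta>)" and "B = om2 x \<bullet> a - L*\<alpha>*c"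
    and "C = omega x a - \<alpha> * (2*c + \<beta>)"
  have "l \<noteq> 0" using nc by (simp add: l_def noncharacteristic_def)
  have "M \<noteq> 0"
    using L \<open>l \<noteq> 0\<close> by (simp add: M_def add_pos_nonneg less_imp_neq[symmetric])
  have v_e2: "gL L x v (e2 L u x) = - c * M / l"
    using gL_tangent_e2[OF u x L tangent nc] by (simp add: M_def l_def R_def c_def)
  have v_e1: "gL L x v (e1 u x) = qb*\<alpha> - pb*\<beta>"
    by (simp add: gL_e1[OF x] pb_def qb_def \<alpha>_def \<beta>_def)
  have acc: "om1 x \<bullet> cov_acc L x v a = A" "om2 x \<bullet> cov_acc L x v a = B"
    "omega x (cov_acc L x v a) = C"
    using cov_acc_coframe[OF x, of L v a] L by (simp_all add: A_def B_def C_def \<alpha>_def \<beta>_def c_def)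
  have acc_e1: "gL L x (cov_acc L x v a) (e1 u x) = qb*A - pb*B"
    by (simp add: gL_e1[OF x] acc pb_def qb_def)
  have acc_e2: "gL L x (cov_acc L x v a) (e2 L u x) = (R*(pb*A + qb*B) - L*l*C) / M"
    by (simp add: gL_e2[OF u x L] acc pb_def qb_def l_def R_def M_def)
  have "gL L x (projT L u x (cov_acc L x v a)) (JL L u x v)
      = (R*(pb*A + qb*B) - L*l*C) * (qb*\<alpha> - pb*\<beta>) / M + (qb*A - pb*B) * c * M / l"
    unfolding gL_projT_JL[OF u x L nc] v_e1 v_e2 acc_e1 acc_e2
    using \<open>l \<noteq> 0\<close> \<open>M \<noteq> 0\<close> by (simp add: field_simps)
  moreover have "normL L x v = sqrt (\<alpha>^2 + \<beta>^2 + L*c^2)"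
    by (simp add: normL_coframe \<alpha>_def \<beta>_def c_def)
  ultimately show ?thesis
    unfolding geod_curv_expr_def Let_def
      pb_def[symmetric] qb_def[symmetric] l_def[symmetric] R_def[symmetric] M_def[symmetric]
      A_def[symmetric] B_def[symmetric] C_def[symmetric]
    by simp
qed

section \<open>The limit as L tends to infinity\<close>

text \<open>This is \<open>geod_curv_expr\<close> at \<open>L = 1/\<epsilon>\<close> with numerator and denominator divided by \<open>L sqrt L\<close>;
  for \<open>c \<noteq> 0\<close> it is continuous at \<open>\<epsilon> = 0\<close>.\<close>

definition geod_curv_rescaled ::
    "real \<Rightarrow> real \<Rightarrow> real \<Rightarrow> real \<Rightarrow> real \<Rightarrow> real \<Rightarrow> real \<Rightarrow> real \<Rightarrow> real \<Rightarrow> real \<Rightarrow> real \<Rightarrow> real"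
  where
  "geod_curv_rescaled pb qb R l \<alpha> \<beta> c A0 B0 C \<epsilon> =
    (let A = A0*\<epsilon> + c*(c+\<beta>); B = B0*\<epsilon> - \<alpha>*c; M = sqrt (l^2 + R^2*\<epsilon>) in
     ((R*(pb*A + qb*B) - l*C) * (qb*\<alpha> - pb*\<beta>) * \<epsilon> / M + (qb*A - pb*B) * c * M / l)
     / sqrt ((\<alpha>^2 + \<beta>^2)*\<epsilon> + c^2) ^ 3)"

lemma geod_curv_expr_rescaled:
  assumes L: "L > 0" and l: "l > 0"
  shows "geod_curv_expr pb qb R l \<alpha> \<beta> c A0 B0 C L
       = geod_curv_rescaled pb qb R l \<alpha> \<beta> c A0 B0 C (1/L)"
proof -
  define s where "s = sqrt L"
  have s: "s > 0" "L = s^2" using L by (simp_all add: s_def)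
  define M where "M = sqrt (l^2 + R^2*(1/L))"
  define D where "D = sqrt ((\<alpha>^2 + \<beta>^2)*(1/L) + c^2)"
  have "M > 0" unfolding M_def using l L by (intro real_sqrt_gt_zero add_pos_nonneg) auto
  have "L*l^2 + R^2 = L * (l^2 + R^2*(1/L))" "\<alpha>^2 + \<beta>^2 + L*c^2 = L * ((\<alpha>^2 + \<beta>^2)*(1/L) + c^2)"
    using L by (simp_all add: field_simps)
  then have "sqrt (L*l^2 + R^2) = s * M" "sqrt (\<alpha>^2 + \<beta>^2 + L*c^2) = s * D"
    unfolding M_def D_def s_def by (simp_all add: real_sqrt_mult)
  then show ?thesis
    unfolding geod_curv_expr_def geod_curv_rescaled_def Let_def M_def[symmetric] D_def[symmetric]
    using s l \<open>M > 0\<close>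
    by (cases "D = 0") (simp_all add: field_simps power3_eq_cube power2_eq_square)
qed

lemma tendsto_at_top_via_inverse:
  fixes F :: "real \<Rightarrow> real"
  assumes "isCont F 0" and "\<forall>\<^sub>F L in at_top. f L = F (1/L)"
  shows "(f \<longlongrightarrow> F 0) at_top"
proof -
  have "((\<lambda>L::real. 1/L) \<longlongrightarrow> 0) at_top"
    using tendsto_inverse_0_at_top[OF filterlim_ident] by (simp add: inverse_eq_divide)
  then have "((\<lambda>L. F (1/L)) \<longlongrightarrow> F 0) at_top"
    by (rule isCont_tendsto_compose[OF assms(1)])
  moreover have "\<forall>\<^sub>F L in at_top. F (1/L) = f L"
    using assms(2) by (simp add: eq_commute)
  ultimately show ?thesis
    by (rule Lim_transform_eventually)
qed

lemma geod_curv_expr_tendsto: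
  assumes l: "l > 0" and c: "c \<noteq> 0"
  shows "((\<lambda>L. geod_curv_expr pb qb R l \<alpha> \<beta> c A0 B0 C L) \<longlongrightarrow> (pb*\<alpha> + qb*(c+\<beta>)) / \<bar>c\<bar>) at_top"
proof -
  have "geod_curv_rescaled pb qb R l \<alpha> \<beta> c A0 B0 C 0 = (qb*(c*(c+\<beta>)) + pb*(\<alpha>*c)) * c / \<bar>c\<bar>^3"
    using l by (simp add: geod_curv_rescaled_def Let_def)
  also have "\<dots> = (pb*\<alpha> + qb*(c+\<beta>)) * (c*c) / (\<bar>c\<bar>*\<bar>c\<bar>*\<bar>c\<bar>)"
    by (simp add: power3_eq_cube algebra_simps)
  also have "\<dots> = (pb*\<alpha> + qb*(c+\<beta>)) / \<bar>c\<bar>"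
    using c by (simp add: abs_mult_self_eq)
  finally have at_0: "geod_curv_rescaled pb qb R l \<alpha> \<beta> c A0 B0 C 0 = (pb*\<alpha> + qb*(c+\<beta>)) / \<bar>c\<bar>" .
  have "isCont (geod_curv_rescaled pb qb R l \<alpha> \<beta> c A0 B0 C) 0"
    unfolding geod_curv_rescaled_def Let_def using l c by (intro continuous_intros) auto
  moreover have "\<forall>\<^sub>F L in at_top. geod_curv_expr pb qb R l \<alpha> \<beta> c A0 B0 C L
      = geod_curv_rescaled pb qb R l \<alpha> \<beta> c A0 B0 C (1/L)"
    using eventually_gt_at_top[of 0] by eventually_elim (use l geod_curv_expr_rescaled in auto)
  ultimately show ?thesis
    unfolding at_0[symmetric] by (rule tendsto_at_top_via_inverse)
qed

lemma geod_curv_expr_horizontal: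
  assumes L: "L > 0" and l: "l > 0"
  shows "geod_curv_expr pb qb R l \<alpha> \<beta> 0 A0 B0 C L = sqrt L *
    ((R*(pb*A0 + qb*B0)*(1/L) - l*C) * (qb*\<alpha> - pb*\<beta>)
      / (sqrt (l^2 + R^2*(1/L)) * sqrt (\<alpha>^2 + \<beta>^2) ^ 3))"
proof -
  define s where "s = sqrt L"
  define M where "M = sqrt (l^2 + R^2*(1/L))"
  define E where "E = sqrt (\<alpha>^2 + \<beta>^2) ^ 3"
  have s: "s > 0" "L = s^2" using L by (simp_all add: s_def)
  have "M > 0" unfolding M_def using l L by (intro real_sqrt_gt_zero add_pos_nonneg) auto
  have "L*l^2 + R^2 = L * (l^2 + R^2*(1/L))"
    using L by (simp add: field_simps)
  then have "sqrt (L*l^2 + R^2) = s * M"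
    unfolding s_def M_def by (simp add: real_sqrt_mult)
  moreover have "sqrt (\<alpha>^2 + \<beta>^2 + L*0^2) ^ 3 = E"
    by (simp add: E_def)
  ultimately show ?thesis
    unfolding geod_curv_expr_def Let_def s_def[symmetric] M_def[symmetric] E_def[symmetric]
    using s \<open>M > 0\<close> by (cases "E = 0") (simp_all add: field_simps power2_eq_square)
qed

lemma geod_curv_expr_horizontal_div_sqrt_tendsto:
  assumes l: "l > 0" and pq: "pb^2 + qb^2 = 1" and c: "c = 0"
    and tangent: "pb*\<alpha> + qb*\<beta> = - R*c/l"
  shows "((\<lambda>L. geod_curv_expr pb qb R l \<alpha> \<beta> c A0 B0 C L / sqrt L)
     \<longlongrightarrow> (- qb*\<alpha> + pb*\<beta>) * C / \<bar>qb*\<alpha> - pb*\<beta>\<bar> ^ 3) at_top"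
proof -
  define F where "F \<epsilon> = (R*(pb*A0 + qb*B0)*\<epsilon> - l*C) * (qb*\<alpha> - pb*\<beta>)
      / (sqrt (l^2 + R^2*\<epsilon>) * sqrt (\<alpha>^2 + \<beta>^2) ^ 3)" for \<epsilon>
  have "\<alpha>^2 + \<beta>^2 = (pb^2 + qb^2) * (\<alpha>^2 + \<beta>^2)"
    using pq by simp
  also have "\<dots> = (qb*\<alpha> - pb*\<beta>)^2 + (pb*\<alpha> + qb*\<beta>)^2"
    by (simp add: algebra_simps power2_eq_square)
  finally have "sqrt (\<alpha>^2 + \<beta>^2) = \<bar>qb*\<alpha> - pb*\<beta>\<bar>"
    using tangent c by simp
  then have "F 0 = l * ((- qb*\<alpha> + pb*\<beta>) * C) / (l * \<bar>qb*\<alpha> - pb*\<beta>\<bar> ^ 3)"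
    unfolding F_def using l by (simp add: algebra_simps)
  then have at_0: "F 0 = (- qb*\<alpha> + pb*\<beta>) * C / \<bar>qb*\<alpha> - pb*\<beta>\<bar> ^ 3"
    using l by simp
  have "isCont F 0"
    unfolding F_def using l
    by (cases "\<alpha>^2 + \<beta>^2 = 0") (auto intro!: continuous_intros)
  moreover have "\<forall>\<^sub>F L in at_top. geod_curv_expr pb qb R l \<alpha> \<beta> 0 A0 B0 C L / sqrt L = F (1/L)"
    using eventually_gt_at_top[of 0]
    by eventually_elim (simp add: geod_curv_expr_horizontal l F_def)
  ultimately show ?thesis
    unfolding at_0[symmetric] c by (rule tendsto_at_top_via_inverse)
qed

lemma geod_curv_expr_horizontal_tendsto_0:
  assumes l: "l > 0" and c: "c = 0" and C: "C = 0"
  shows "(geod_curv_expr pb qb R l \<alpha> \<beta> c A0 B0 C \<longlongrightarrow> 0) at_top"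
proof -
  define F where "F \<epsilon> = sqrt \<epsilon> * R*(pb*A0 + qb*B0) * (qb*\<alpha> - pb*\<beta>)
      / (sqrt (l^2 + R^2*\<epsilon>) * sqrt (\<alpha>^2 + \<beta>^2) ^ 3)" for \<epsilon>
  have "isCont F 0"
    unfolding F_def using l
    by (cases "\<alpha>^2 + \<beta>^2 = 0") (auto intro!: continuous_intros)
  moreover have "\<forall>\<^sub>F L in at_top. geod_curv_expr pb qb R l \<alpha> \<beta> 0 A0 B0 0 L = F (1/L)"
  proof (rule eventually_mono[OF eventually_gt_at_top[of 0]])
    fix L :: real assume L: "L > 0"
    define s where "s = sqrt L"
    define M where "M = sqrt (l^2 + R^2*(1/L))"
    have s: "s > 0" "L = s^2" "sqrt (1/L) = 1/s" using L by (simp_all add: s_def real_sqrt_divide)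
    have "M > 0" unfolding M_def using l L by (intro real_sqrt_gt_zero add_pos_nonneg) auto
    show "geod_curv_expr pb qb R l \<alpha> \<beta> 0 A0 B0 0 L = F (1/L)"
      unfolding geod_curv_expr_horizontal[OF L l] F_def s_def[symmetric] M_def[symmetric] s(3)
      using s \<open>M > 0\<close>
      by (cases "\<alpha>^2 + \<beta>^2 = 0") (simp_all add: field_simps power2_eq_square)
  qed
  ultimately show ?thesis
    using tendsto_at_top_via_inverse[of F] by (simp add: F_def c C)
qed

section \<open>Curves on the surface\<close>

lemma C2_curve_has_vector_derivative:
  assumes "C2_curve \<gamma> a b" and ab: "a < b" and s: "s \<in> {a..b}"
  defines "\<gamma>' \<equiv> \<lambda>r. vector_derivative \<gamma> (at r within {a..b})"
  shows "(\<gamma> has_vector_derivative \<gamma>' s) (at s within {a..b})"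
    and "(\<gamma>' has_vector_derivative vector_derivative \<gamma>' (at s within {a..b})) (at s within {a..b})"
proof -
  obtain g1 g2 where g1: "\<And>s. s \<in> {a..b} \<Longrightarrow> (\<gamma> has_vector_derivative g1 s) (at s within {a..b})"
    and g2: "\<And>s. s \<in> {a..b} \<Longrightarrow> (g1 has_vector_derivative g2 s) (at s within {a..b})"
    using assms(1) unfolding C2_curve_def by blast
  have \<gamma>': "\<gamma>' s = g1 s" if "s \<in> {a..b}" for s
    unfolding \<gamma>'_def by (rule vector_derivative_within_closed_interval[OF ab that g1[OF that]])
  show "(\<gamma> has_vector_derivative \<gamma>' s) (at s within {a..b})"
    using g1[OF s] \<gamma>'[OF s] by simp
  have "(\<gamma>' has_vector_derivative g2 s) (at s within {a..b})"
    by (rule has_vector_derivative_transform[OF s \<gamma>' g2[OF s]])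
  moreover have "vector_derivative \<gamma>' (at s within {a..b}) = g2 s"
    by (rule vector_derivative_within_closed_interval[OF ab s calculation])
  ultimately show
    "(\<gamma>' has_vector_derivative vector_derivative \<gamma>' (at s within {a..b})) (at s within {a..b})"
    by simp
qed

lemma frechet_derivative_tangent_to_level_set:
  fixes f :: "'a::real_normed_vector \<Rightarrow> 'b::euclidean_space"
  assumes f: "f differentiable (at (\<gamma> t))"
    and \<gamma>: "(\<gamma> has_vector_derivative v) (at t within {a..b})"
    and ab: "a < b" and t: "t \<in> {a..b}"
    and level: "\<And>s. s \<in> {a..b} \<Longrightarrow> f (\<gamma> s) = 0"
  shows "frechet_derivative f (at (\<gamma> t)) v = 0"
proof -
  have "(f has_derivative frechet_derivative f (at (\<gamma> t))) (at (\<gamma> t) within \<gamma> ` {a..b})"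
    using f frechet_derivative_works has_derivative_at_withinI by blast
  then have "((f \<circ> \<gamma>) has_vector_derivative frechet_derivative f (at (\<gamma> t)) v) (at t within {a..b})"
    by (rule vector_derivative_diff_chain_within[OF \<gamma>])
  then have "vector_derivative (f \<circ> \<gamma>) (at t within {a..b}) = frechet_derivative f (at (\<gamma> t)) v"
    by (rule vector_derivative_within_closed_interval[OF ab t])
  moreover have "((f \<circ> \<gamma>) has_vector_derivative 0) (at t within {a..b})"
    by (rule has_vector_derivative_transform[OF t _ has_vector_derivative_const]) (simp add: level)
  then have "vector_derivative (f \<circ> \<gamma>) (at t within {a..b}) = 0"
    by (rule vector_derivative_within_closed_interval[OF ab t])
  ultimately show ?thesis
    by simp
qed

lemma omega_along_curve_has_derivative:
  assumes \<gamma>: "(\<gamma> has_vector_derivative v) (at t within S)"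
    and \<gamma>': "(\<gamma>' has_vector_derivative a) (at t within S)"
    and v: "\<gamma>' t = v" and x: "\<gamma> t $ 1 \<noteq> 0"
  shows "((\<lambda>s. omega (\<gamma> s) (\<gamma>' s)) has_real_derivative
      omega (\<gamma> t) a - (om1 (\<gamma> t) \<bullet> v) * (omega (\<gamma> t) v + om2 (\<gamma> t) \<bullet> v)) (at t within S)"
proof -
  have component: "((\<lambda>s. g s $ i) has_real_derivative g' $ i) (at t within S)"
    if "(g has_vector_derivative g') (at t within S)" for g :: "real \<Rightarrow> real^3" and g' i
    using bounded_linear.has_vector_derivative[OF bounded_linear_vec_nth that]
    by (simp add: has_real_derivative_iff_has_vector_derivative)
  show ?thesis
    unfolding omega_eq om1_inner om2_inner using x v
    by (auto intro!: derivative_eq_intros component[OF \<gamma>] component[OF \<gamma>'] simp: field_simps)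
qed

lemma regular_surface_point:
  assumes "regular_surface u \<Sigma>" and "x \<in> \<Sigma>"
  shows "x$1 > 0" and "u differentiable (at x)" and "u x = 0"
proof -
  have "x \<in> AffG" "u x = 0" and "C2_on AffG u"
    using assms unfolding regular_surface_def by auto
  then show "x$1 > 0" "u differentiable (at x)" "u x = 0"
    unfolding AffG_def C2_on_def differentiable_def by auto
qed

lemma curve_in_regular_surface:
  assumes surf: "regular_surface u \<Sigma>" and ab: "a < b" and curve: "C2_curve \<gamma> a b"
    and on_surf: "\<gamma> ` {a..b} \<subseteq> \<Sigma>" and t: "t \<in> {a..b}"
  shows "\<gamma> t $ 1 > 0" and "u differentiable (at (\<gamma> t))"
    and "frechet_derivative u (at (\<gamma> t)) (vector_derivative \<gamma> (at t within {a..b})) = 0"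
proof -
  have "\<gamma> s \<in> \<Sigma>" if "s \<in> {a..b}" for s
    using on_surf that by blast
  note point = regular_surface_point[OF surf this]
  show "\<gamma> t $ 1 > 0" "u differentiable (at (\<gamma> t))"
    using point t by auto
  then show "frechet_derivative u (at (\<gamma> t)) (vector_derivative \<gamma> (at t within {a..b})) = 0"
    using frechet_derivative_tangent_to_level_set[of u \<gamma> t, OF _
        C2_curve_has_vector_derivative(1)[OF curve ab t] ab t point(3)] by simp
qed

lemma geod_curv_s_eq_expr:
  assumes surf: "regular_surface u \<Sigma>" and ab: "a < b" and curve: "C2_curve \<gamma> a b"
    and on_surf: "\<gamma> ` {a..b} \<subseteq> \<Sigma>" and t: "t \<in> {a..b}"
    and nc: "noncharacteristic u (\<gamma> t)" and L: "L > 0"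
  defines "x \<equiv> \<gamma> t" and "v \<equiv> vector_derivative \<gamma> (at t within {a..b})"
    and "acc \<equiv> vector_derivative (\<lambda>s. vector_derivative \<gamma> (at s within {a..b})) (at t within {a..b})"
  shows "geod_curv_s L u \<gamma> a b t = geod_curv_expr (pbar u x) (qbar u x)
      (frechet_derivative u (at x) (X3 x)) (lu u x) (om1 x \<bullet> v) (om2 x \<bullet> v) (omega x v)
      (om1 x \<bullet> acc - (om1 x \<bullet> v)^2) (om2 x \<bullet> acc)
      (omega x acc - (om1 x \<bullet> v) * (2 * omega x v + om2 x \<bullet> v)) L"
  using curvature_eq_geod_curv_expr[OF _ L _ curve_in_regular_surface(3)[OF surf ab curve on_surf t] nc]
    curve_in_regular_surface(1,2)[OF surf ab curve on_surf t]
  unfolding geod_curv_s_def Let_def x_def v_def acc_def by simp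

lemma omega_along_curve_vector_derivative:
  assumes curve: "C2_curve \<gamma> a b" and ab: "a < b" and t: "t \<in> {a..b}" and x: "\<gamma> t $ 1 \<noteq> 0"
  defines "x \<equiv> \<gamma> t" and "v \<equiv> vector_derivative \<gamma> (at t within {a..b})"
    and "acc \<equiv> vector_derivative (\<lambda>s. vector_derivative \<gamma> (at s within {a..b})) (at t within {a..b})"
  shows "vector_derivative (\<lambda>s. omega (\<gamma> s) (vector_derivative \<gamma> (at s within {a..b}))) (at t within {a..b})
    = omega x acc - (om1 x \<bullet> v) * (omega x v + om2 x \<bullet> v)"
  using omega_along_curve_has_derivative[OF C2_curve_has_vector_derivative[OF curve ab t] _ x]
  unfolding x_def v_def acc_def has_real_derivative_iff_has_vector_derivative
  by (simp add: vector_derivative_within_closed_interval[OF ab t])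

theorem lemma3p6:
  fixes u :: "real^3 \<Rightarrow> real" and \<Sigma> :: "(real^3) set"
    and \<gamma> :: "real \<Rightarrow> real^3" and a b t :: real
  assumes surf: "regular_surface u \<Sigma>"
    and ab: "a < b"
    and curve: "regular_curve \<gamma> a b"
    and on_surf: "\<gamma> ` {a..b} \<subseteq> \<Sigma>"
    and t: "t \<in> {a..b}"
    and nonchar: "noncharacteristic u (\<gamma> t)"
  defines "dg \<equiv> (\<lambda>s. vector_derivative \<gamma> (at s within {a..b}))"
    and "w \<equiv> (\<lambda>s. omega (\<gamma> s) (vector_derivative \<gamma> (at s within {a..b})))"
    and "pb \<equiv> pbar u (\<gamma> t)"
    and "qb \<equiv> qbar u (\<gamma> t)"
  shows
    "(w t \<noteq> 0 \<longrightarrow>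
        ((\<lambda>L. geod_curv_s L u \<gamma> a b t) \<longlongrightarrow>
           (pb * dg t $ 1 + qb * dg t $ 2) / (\<gamma> t $ 1 * \<bar>w t\<bar>)) at_top)
     \<and> (w t = 0 \<and> vector_derivative w (at t within {a..b}) = 0 \<longrightarrow>
        ((\<lambda>L. geod_curv_s L u \<gamma> a b t) \<longlongrightarrow> 0) at_top)
     \<and> (w t = 0 \<and> vector_derivative w (at t within {a..b}) \<noteq> 0 \<longrightarrow>
        ((\<lambda>L. geod_curv_s L u \<gamma> a b t / sqrt L) \<longlongrightarrow>
           ((- qb * (dg t $ 1 / \<gamma> t $ 1) + pb * dg t $ 3) * vector_derivative w (at t within {a..b}))
           / \<bar>qb * (dg t $ 1 / \<gamma> t $ 1) - pb * dg t $ 3\<bar> ^ 3) at_top)"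
proof -
  define x v acc where "x = \<gamma> t" and "v = dg t"
    and "acc = vector_derivative dg (at t within {a..b})"
  define \<alpha> \<beta> c where "\<alpha> = om1 x \<bullet> v" and "\<beta> = om2 x \<bullet> v" and "c = omega x v"
  define l R C where "l = lu u x" and "R = frechet_derivative u (at x) (X3 x)"
    and "C = omega x acc - \<alpha> * (2*c + \<beta>)"
  define K where "K = geod_curv_expr pb qb R l \<alpha> \<beta> c (om1 x \<bullet> acc - \<alpha>^2) (om2 x \<bullet> acc) C"
  have C2: "C2_curve \<gamma> a b"
    using curve by (simp add: regular_curve_def)
  note point = curve_in_regular_surface[OF surf ab C2 on_surf t]
  have curvature: "\<forall>\<^sub>F L in at_top. K L = geod_curv_s L u \<gamma> a b t"
    using eventually_gt_at_top[of 0]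
    by eventually_elim (simp add: geod_curv_s_eq_expr[OF surf ab C2 on_surf t nonchar] K_def
        x_def v_def acc_def dg_def pb_def qb_def \<alpha>_def \<beta>_def c_def l_def R_def C_def)
  then have curvature_sqrt: "\<forall>\<^sub>F L in at_top. K L / sqrt L = geod_curv_s L u \<gamma> a b t / sqrt L"
    by (rule eventually_mono) simp
  have w_t: "w t = c" and w': "vector_derivative w (at t within {a..b}) = C + \<alpha> * c"
    using omega_along_curve_vector_derivative[OF C2 ab t] point(1)
    by (simp_all add: w_def x_def v_def acc_def dg_def \<alpha>_def \<beta>_def c_def C_def algebra_simps)
  have "l \<ge> 0" "l \<noteq> 0"
    using nonchar by (simp_all add: l_def x_def noncharacteristic_def lu_def)
  then have "l > 0" by simp
  have pq: "pb^2 + qb^2 = 1" and tangent: "pb*\<alpha> + qb*\<beta> = - R*c/l"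
    using pbar_qbar_sum_squares[OF nonchar] pbar_qbar_tangent[OF point(2) _ point(3)] point(1)
    by (simp_all add: pb_def qb_def x_def \<alpha>_def \<beta>_def c_def v_def dg_def l_def R_def)
  have "pb*\<alpha> + qb*(c+\<beta>) = (pb * v $ 1 + qb * v $ 2) / x $ 1"
    using point(1) by (simp add: x_def \<alpha>_def \<beta>_def c_def om1_inner om2_inner omega_eq field_simps)
  then show ?thesis
    using Lim_transform_eventually[OF geod_curv_expr_tendsto[OF \<open>l > 0\<close>] curvature[unfolded K_def]]
      Lim_transform_eventually[OF geod_curv_expr_horizontal_tendsto_0[OF \<open>l > 0\<close>]
        curvature[unfolded K_def]]
      Lim_transform_eventually[OF geod_curv_expr_horizontal_div_sqrt_tendsto[OF \<open>l > 0\<close> pq _ tangent]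
        curvature_sqrt[unfolded K_def]]
    unfolding w_t w' v_def x_def \<alpha>_def \<beta>_def by (auto simp: om1_inner om2_inner)
qed

end
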